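(* Assume the setting in the context (in particular $l=1$). Fix $\Lambda$ a bounded Borel subset of $\mathbb R^d$ and $\alpha\in(0,1]$. Then $$r(x+\varepsilon y,\gamma)^\alpha\to r(x,\gamma)^\alpha\quad\text{in }L^2\big(\Gamma\times\Lambda\times\mathbb R^d,\ \mu(d\gamma)\,dx\,dy\,a(y)\big)\ \text{ as }\varepsilon\to0.$$
   Context: $X=\mathbb R^d$ with Lebesgue measure; $\Gamma$ is the set of locally finite subsets of $\mathbb R^d$ with the vague topology and Borel $\sigma$-algebra. $K$ is a bounded self-adjoint nonnegative operator on the real space $L^2(\mathbb R^d,dx)$, locally of trace class, whose square root $\sqrt K$ has integral kernel $\varkappa(x-y)$ with $\varkappa$ a function on $\mathbb R^d$ satisfying $\lim_{y\to0}\int_{\mathbb R^d}(\varkappa(x)-\varkappa(x+y))^2dx=0$; $k(x,y)=\int\varkappa(x-z)\varkappa(y-z)dz$. The function $a:\mathbb R^d\to[0,\infty)$ is bounded, measurable, integrable, compactly supported and radial ($a(x)=\tilde a(|x|)$). $Y$ is a measurable random field on $(\Omega,\mathcal A,\mathbb P)$ with $Y(x)$ centered Gaussian and $\mathbb E(Y(x)Y(y))=k(x,y)$; $\mu=\mu^{(1)}(d\gamma)=\int_\Omega\mathbb P(d\omega)\pi_{Y(x,\omega)^2dx}(d\gamma)$ is the Cox process ($\pi_{g\,dx}$ the Poisson point process with intensity $g(x)dx$), and $r(x,\gamma)=\widetilde{\mathbb E}(Y(x)^2\mid\mathcal F)(\gamma)$ is its Papangelou intensity, with $\widetilde{\mathbb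 P}(d\omega,d\gamma)=\mathbb P(d\omega)\pi_{Y(x,\omega)^2dx}(d\gamma)$ and $\mathcal F$ the $\sigma$-algebra generated by $(\omega,\gamma)\mapsto F(\gamma)$. *)

theory Defs
  imports "HOL-Probability.Probability"
begin

definition locfin :: "'a::euclidean_space set \<Rightarrow> bool" where
  "locfin \<gamma> \<longleftrightarrow> (\<forall>R::real. finite (\<gamma> \<inter> cball 0 R))"

text \<open>The configuration space Gamma with its Borel sigma-algebra (vague topology), which is
  generated by the counting maps gamma |-> card (gamma \<inter> B), B bounded Borel.\<close>
definition Gamma :: "'a::euclidean_space set measure" where
  "Gamma = sigma (Collect locfin)
     {{\<gamma>. locfin \<gamma> \<and> card (\<gamma> \<inter> B) = n} | B n. B \<in> sets lborel \<and> bounded B}"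

text \<open>The operator sqrt K: f |-> (x |-> integral kappa(x - z) f(z) dz).\<close>
definition conv_op :: "('a::euclidean_space \<Rightarrow> real) \<Rightarrow> ('a \<Rightarrow> real) \<Rightarrow> 'a \<Rightarrow> real" where
  "conv_op \<kappa> f x = (LINT z|lborel. \<kappa> (x - z) * f z)"

definition sq_int :: "('a::euclidean_space \<Rightarrow> real) \<Rightarrow> bool" where
  "sq_int f \<longleftrightarrow> f \<in> borel_measurable lborel \<and> integrable lborel (\<lambda>x. (f x)\<^sup>2)"

text \<open>Standing assumptions on kappa: sqrt K (integral operator with kernel kappa(x-y)) is a
  bounded, self-adjoint, nonnegative operator on real L2; K = (sqrt K)^2 is locally of
  trace class, which (for K = A^2, A self-adjoint with kernel kappa(x-y)) amounts to
  kappa being square integrable; and the L2-continuity of translations.\<close>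
definition kernel_ok :: "('a::euclidean_space \<Rightarrow> real) \<Rightarrow> bool" where
  "kernel_ok \<kappa> \<longleftrightarrow>
     sq_int \<kappa> \<and>
     (\<exists>C. \<forall>f. sq_int f \<longrightarrow> sq_int (conv_op \<kappa> f) \<and>
          (LINT x|lborel. (conv_op \<kappa> f x)\<^sup>2) \<le> C * (LINT x|lborel. (f x)\<^sup>2)) \<and>
     (\<forall>f g. sq_int f \<longrightarrow> sq_int g \<longrightarrow>
          (LINT x|lborel. conv_op \<kappa> f x * g x) = (LINT x|lborel. f x * conv_op \<kappa> g x)) \<and>
     (\<forall>f. sq_int f \<longrightarrow> (LINT x|lborel. conv_op \<kappa> f x * f x) \<ge> 0) \<and>
     ((\<lambda>y. LINT x|lborel. (\<kappa> x - \<kappa> (x + y))\<^sup>2) \<longlongrightarrow> 0) (at 0)"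

definition kcov :: "('a::euclidean_space \<Rightarrow> real) \<Rightarrow> 'a \<Rightarrow> 'a \<Rightarrow> real" where
  "kcov \<kappa> x y = (LINT z|lborel. \<kappa> (x - z) * \<kappa> (y - z))"

definition weight_ok :: "('a::euclidean_space \<Rightarrow> real) \<Rightarrow> bool" where
  "weight_ok a \<longleftrightarrow> a \<in> borel_measurable lborel \<and> (\<forall>x. a x \<ge> 0) \<and> bounded (range a) \<and>
     integrable lborel a \<and> bounded {x. a x \<noteq> 0} \<and> (\<exists>ta::real \<Rightarrow> real. \<forall>x. a x = ta (norm x))"

text \<open>Y is a measurable, centered Gaussian random field with covariance k:
  every finite linear combination is centered normal (possibly degenerate)
  with the prescribed variance (characterised via characteristic functions).\<close>
definition gaussian_field ::
  "'w measure \<Rightarrow> ('a::euclidean_space \<Rightarrow> 'w \<Rightarrow> real) \<Rightarrow> ('a \<Rightarrow> 'a \<Rightarrow> real) \<Rightarrow> bool" where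
  "gaussian_field P Y k \<longleftrightarrow> prob_space P \<and>
     (\<lambda>(x, \<omega>). Y x \<omega>) \<in> borel_measurable (lborel \<Otimes>\<^sub>M P) \<and>
     (\<forall>(n::nat) (xs::nat \<Rightarrow> 'a) (c::nat \<Rightarrow> real) t.
        char (distr P borel (\<lambda>\<omega>. \<Sum>i<n. c i * Y (xs i) \<omega>)) t =
        complex_of_real (exp (- (\<Sum>i<n. \<Sum>j<n. c i * c j * k (xs i) (xs j)) * t\<^sup>2 / 2)))"

definition poisson_prob :: "real \<Rightarrow> nat \<Rightarrow> real" where
  "poisson_prob m n = exp (- m) * m ^ n / fact n"

text \<open>Pt is the joint law P(d omega) pi_{Y(x,omega)^2 dx}(d gamma) on Omega x Gamma: for every
  event A of Omega and pairwise disjoint bounded Borel sets B_0..B_{m-1}, the probability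
  that omega \<in> A and gamma has n_i points in B_i equals the P-integral over A of the
  product of Poisson probabilities with means integral_{B_i} Y(x,omega)^2 dx.\<close>
definition cox_joint ::
  "'w measure \<Rightarrow> ('a::euclidean_space \<Rightarrow> 'w \<Rightarrow> real) \<Rightarrow> ('w \<times> 'a set) measure \<Rightarrow> bool" where
  "cox_joint P Y Pt \<longleftrightarrow> sets Pt = sets (P \<Otimes>\<^sub>M Gamma) \<and>
     (\<forall>A (m::nat) (B::nat \<Rightarrow> 'a set) (n::nat \<Rightarrow> nat).
        A \<in> sets P \<longrightarrow> (\<forall>i<m. B i \<in> sets lborel \<and> bounded (B i)) \<longrightarrow>
        disjoint_family_on B {..<m} \<longrightarrow>
        emeasure Pt (A \<times> {\<gamma>\<in>space Gamma. \<forall>i<m. card (\<gamma> \<inter> B i) = n i}) =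
        (\<integral>\<^sup>+\<omega>\<in>A. ennreal (\<Prod>i<m. poisson_prob (LINT x:B i|lborel. (Y x \<omega>)\<^sup>2) (n i)) \<partial>P))"

text \<open>r is (a jointly measurable, nonnegative version of) the Papangelou intensity
  r(x,gamma) = E~(Y(x)^2 | F)(gamma), for almost every x.\<close>
definition papangelou ::
  "('w \<times> 'a::euclidean_space set) measure \<Rightarrow> ('a \<Rightarrow> 'w \<Rightarrow> real) \<Rightarrow> ('a \<Rightarrow> 'a set \<Rightarrow> real) \<Rightarrow> bool" where
  "papangelou Pt Y r \<longleftrightarrow>
     (\<lambda>(x, \<gamma>). r x \<gamma>) \<in> borel_measurable (lborel \<Otimes>\<^sub>M Gamma) \<and> (\<forall>x \<gamma>. r x \<gamma> \<ge> 0) \<and>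
     (AE x in lborel. \<forall>S\<in>sets Gamma.
        (\<integral>\<^sup>+p. indicator S (snd p) * ennreal ((Y x (fst p))\<^sup>2) \<partial>Pt) =
        (\<integral>\<^sup>+p. indicator S (snd p) * ennreal (r x (snd p)) \<partial>Pt))"

end

theory Submission
  imports Defs
begin

(* Write F(x, gamma) = r(x, gamma) powr alpha. Since alpha <= 1, F^2 <= 1 + r^2, and r(x, .) is the
  conditional expectation of Y(x)^2 given the configuration, so by the conditional Jensen inequality
  E r(x)^2 <= E Y(x)^4 = 3 k(x,x)^2; as k(x,x) = int kappa^2 does not depend on x, F has uniformly
  bounded second moments. Finiteness then follows from Fubini and the translation invariance of
  Lebesgue measure. For the limit: while eps stays bounded, only the values of F(., gamma) on a fixed
  ball B enter, and for almost every gamma the function g = F(., gamma) * 1_B lies in L^2. Continuity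
  of translations in L^2 (boxes, then Borel sets by Dynkin's theorem, then simple functions, then
  L^2-limits) gives int a(y) |g(. + eps y) - g|_2^2 dy -> 0, and dominated convergence in gamma, with
  dominating function 4 |a|_1 |g|_2^2, concludes. *)

lemma nn_integral_lborel_translate:
  fixes c :: "'a::euclidean_space"
  assumes [measurable]: "f \<in> borel_measurable borel"
  shows "(\<integral>\<^sup>+x. f (x + c) \<partial>lborel) = (\<integral>\<^sup>+x. f x \<partial>lborel)"
proof -
  have "(\<integral>\<^sup>+x. f x \<partial>lborel) = (\<integral>\<^sup>+x. f x \<partial>distr lborel borel ((+) c))"
    by (simp add: lborel_distr_plus)
  also have "\<dots> = (\<integral>\<^sup>+x. f (c + x) \<partial>lborel)"
    by (subst nn_integral_distr) auto
  finally show ?thesis by (simp add: add.commute)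
qed

lemma ball_in_sets_borel [measurable]: "ball x r \<in> sets borel"
  by simp

lemma ennreal_power2_add_le:
  fixes u v :: real
  shows "ennreal ((u + v)\<^sup>2) \<le> 2 * ennreal (u\<^sup>2) + 2 * ennreal (v\<^sup>2)"
proof -
  have "(u + v)\<^sup>2 \<le> 2 * u\<^sup>2 + 2 * v\<^sup>2"
    using zero_le_power2[of "u - v"] by (simp add: power2_eq_square algebra_simps)
  then have "ennreal ((u + v)\<^sup>2) \<le> ennreal (2 * u\<^sup>2 + 2 * v\<^sup>2)"
    by (rule ennreal_leI)
  also have "\<dots> = 2 * ennreal (u\<^sup>2) + 2 * ennreal (v\<^sup>2)"
    by (subst ennreal_plus) (auto simp: ennreal_mult)
  finally show ?thesis .
qed

lemma ennreal_power2_add3_le: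
  fixes u v w :: real
  shows "ennreal ((u + v + w)\<^sup>2) \<le> 3 * ennreal (u\<^sup>2) + 3 * ennreal (v\<^sup>2) + 3 * ennreal (w\<^sup>2)"
proof -
  have "(u + v + w)\<^sup>2 \<le> 3 * u\<^sup>2 + 3 * v\<^sup>2 + 3 * w\<^sup>2"
    using zero_le_power2[of "u - v"] zero_le_power2[of "u - w"] zero_le_power2[of "v - w"]
    by (simp add: power2_eq_square algebra_simps)
  then have "ennreal ((u + v + w)\<^sup>2) \<le> ennreal (3 * u\<^sup>2 + 3 * v\<^sup>2 + 3 * w\<^sup>2)"
    by (rule ennreal_leI)
  also have "\<dots> = 3 * ennreal (u\<^sup>2) + 3 * ennreal (v\<^sup>2) + 3 * ennreal (w\<^sup>2)"
    by (subst ennreal_plus, simp, simp)+ (auto simp: ennreal_mult)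
  finally show ?thesis .
qed

lemma ennreal_tendsto_0_iff_eventually_less:
  fixes f :: "'b \<Rightarrow> ennreal"
  shows "(f \<longlongrightarrow> 0) F \<longleftrightarrow> (\<forall>e>0. eventually (\<lambda>x. f x < ennreal e) F)"
proof
  assume "(f \<longlongrightarrow> 0) F"
  then show "\<forall>e>0. eventually (\<lambda>x. f x < ennreal e) F"
    by (auto simp: order_tendsto_iff)
next
  assume *: "\<forall>e>0. eventually (\<lambda>x. f x < ennreal e) F"
  show "(f \<longlongrightarrow> 0) F"
    unfolding order_tendsto_iff
  proof safe
    fix a :: ennreal assume "0 < a"
    then obtain e where "0 < e" "ennreal e \<le> a"
      by (metis ennreal_le_epsilon not_le ennreal_less_zero_iff ennreal_enn2real_if less_imp_le
          less_numeral_extra(1) top.extremum_strict)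
    with * show "eventually (\<lambda>x. f x < a) F"
      by (auto elim!: eventually_mono)
  qed auto
qed

lemma tendsto_at_sequentiallyI:
  fixes f :: "'a::first_countable_topology \<Rightarrow> 'b::topological_space"
  assumes "\<And>X. X \<longlonglongrightarrow> x \<Longrightarrow> (\<lambda>n. f (X n)) \<longlonglongrightarrow> l"
  shows "(f \<longlongrightarrow> l) (at x)"
  unfolding tendsto_at_iff_sequentially using assms by (auto simp: comp_def)

lemma add_scaleR_mem_ball:
  fixes x y :: "'a::real_normed_vector"
  assumes "norm x \<le> R" "norm y \<le> S" "\<bar>e\<bar> \<le> E" "0 \<le> S"
  shows "x + e *\<^sub>R y \<in> ball 0 (R + E * S + 1)"
proof -
  have "norm (x + e *\<^sub>R y) \<le> norm x + \<bar>e\<bar> * norm y"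
    using norm_triangle_ineq[of x "e *\<^sub>R y"] by simp
  also have "\<dots> \<le> R + E * S"
    using assms by (intro add_mono mult_mono) auto
  finally show ?thesis
    by simp
qed

lemma simple_function_mult_indicator_eq_sum:
  fixes f :: "'a \<Rightarrow> real"
  assumes "finite (range f)"
  shows "f x * indicator K x = (\<Sum>v\<in>range f. v * indicator (f -` {v} \<inter> K) x)"
proof -
  have "(\<Sum>v\<in>range f. v * indicator (f -` {v} \<inter> K) x) =
        (\<Sum>v\<in>range f. if v = f x then f x * indicator K x else 0)"
    by (intro sum.cong) (auto simp: indicator_def)
  also have "\<dots> = f x * indicator K x"
    using assms by simp
  finally show ?thesis ..
qed

lemma powr_square_le_1_plus_square:
  fixes r \<alpha> :: real
  assumes "0 \<le> r" "0 < \<alpha>" "\<alpha> \<le> 1"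
  shows "(r powr \<alpha>)\<^sup>2 \<le> 1 + r\<^sup>2"
proof (cases "r \<le> 1")
  case True
  then have "r powr \<alpha> \<le> 1"
    using assms by (intro powr_le1) auto
  then show ?thesis
    by (simp add: add_increasing2 power_le_one)
next
  case False
  then have "r powr \<alpha> \<le> r"
    using assms powr_mono[of \<alpha> 1 r] by simp
  then show ?thesis
    by (simp add: add_increasing power_mono)
qed

lemma nn_integral_square_diff_LIMSEQ_0:
  fixes g :: "'a \<Rightarrow> real" and u :: "nat \<Rightarrow> 'a \<Rightarrow> real"
  assumes [measurable]: "g \<in> borel_measurable M" "\<And>i. u i \<in> borel_measurable M"
    and finite: "(\<integral>\<^sup>+x. ennreal ((g x)\<^sup>2) \<partial>M) < \<infinity>"
    and lim: "\<And>x. (\<lambda>i. u i x) \<longlonglongrightarrow> g x"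
    and bound: "\<And>i x. \<bar>u i x\<bar> \<le> c * \<bar>g x\<bar>"
  shows "(\<lambda>i. \<integral>\<^sup>+x. ennreal ((g x - u i x)\<^sup>2) \<partial>M) \<longlonglongrightarrow> 0"
proof -
  have "(\<lambda>i. \<integral>\<^sup>+x. ennreal ((g x - u i x)\<^sup>2) \<partial>M) \<longlonglongrightarrow> (\<integral>\<^sup>+x. 0 \<partial>M)"
  proof (rule nn_integral_dominated_convergence[where w="\<lambda>x. ennreal ((1 + c)\<^sup>2 * (g x)\<^sup>2)"])
    show "(\<integral>\<^sup>+x. ennreal ((1 + c)\<^sup>2 * (g x)\<^sup>2) \<partial>M) < \<infinity>"
      using finite by (simp add: ennreal_mult nn_integral_cmult ennreal_mult_less_top)
    show "AE x in M. ennreal ((g x - u i x)\<^sup>2) \<le> ennreal ((1 + c)\<^sup>2 * (g x)\<^sup>2)" for i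
    proof (rule AE_I2, rule ennreal_leI)
      fix x
      have "\<bar>g x - u i x\<bar> \<le> (1 + c) * \<bar>g x\<bar>"
        using abs_triangle_ineq4[of "g x" "u i x"] bound[of i x] by (simp add: distrib_right)
      from power_mono[OF this abs_ge_zero, of 2]
      show "(g x - u i x)\<^sup>2 \<le> (1 + c)\<^sup>2 * (g x)\<^sup>2"
        by (simp add: power_mult_distrib)
    qed
    show "AE x in M. (\<lambda>i. ennreal ((g x - u i x)\<^sup>2)) \<longlonglongrightarrow> 0"
    proof (rule AE_I2)
      fix x
      have "(\<lambda>i. (g x - u i x)\<^sup>2) \<longlonglongrightarrow> (g x - g x)\<^sup>2"
        by (intro tendsto_intros lim)
      then have "(\<lambda>i. ennreal ((g x - u i x)\<^sup>2)) \<longlonglongrightarrow> ennreal ((g x - g x)\<^sup>2)"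
        by (rule tendsto_ennrealI)
      then show "(\<lambda>i. ennreal ((g x - u i x)\<^sup>2)) \<longlonglongrightarrow> 0"
        by simp
    qed
  qed measurable
  then show ?thesis
    by simp
qed

section \<open>Continuity of translations in $L^2$\<close>

definition shift_sqdist :: "('a::euclidean_space \<Rightarrow> real) \<Rightarrow> 'a \<Rightarrow> ennreal" where
  "shift_sqdist g h = (\<integral>\<^sup>+x. ennreal ((g (x + h) - g x)\<^sup>2) \<partial>lborel)"

definition L2_shift_continuous :: "('a::euclidean_space \<Rightarrow> real) \<Rightarrow> bool" where
  "L2_shift_continuous g \<longleftrightarrow> g \<in> borel_measurable borel \<and>
     (\<integral>\<^sup>+x. ennreal ((g x)\<^sup>2) \<partial>lborel) < \<infinity> \<and> (shift_sqdist g \<longlongrightarrow> 0) (at 0)"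

lemma shift_sqdist_0 [simp]: "shift_sqdist g 0 = 0"
  by (simp add: shift_sqdist_def)

lemma shift_sqdist_le:
  assumes [measurable]: "g \<in> borel_measurable borel"
  shows "shift_sqdist g h \<le> 4 * (\<integral>\<^sup>+x. ennreal ((g x)\<^sup>2) \<partial>lborel)"
proof -
  have "shift_sqdist g h \<le> (\<integral>\<^sup>+x. 2 * ennreal ((g (x + h))\<^sup>2) + 2 * ennreal ((g x)\<^sup>2) \<partial>lborel)"
    unfolding shift_sqdist_def
    by (intro nn_integral_mono) (metis diff_conv_add_uminus power2_minus ennreal_power2_add_le)
  also have "\<dots> = 2 * (\<integral>\<^sup>+x. ennreal ((g (x + h))\<^sup>2) \<partial>lborel) + 2 * (\<integral>\<^sup>+x. ennreal ((g x)\<^sup>2) \<partial>lborel)"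
    by (simp add: nn_integral_add nn_integral_cmult)
  also have "(\<integral>\<^sup>+x. ennreal ((g (x + h))\<^sup>2) \<partial>lborel) = (\<integral>\<^sup>+x. ennreal ((g x)\<^sup>2) \<partial>lborel)"
    by (rule nn_integral_lborel_translate[where f="\<lambda>x. ennreal ((g x)\<^sup>2)"]) simp
  finally show ?thesis
    by (simp add: distrib_right[symmetric] mult.commute)
qed

lemma shift_sqdist_add_le:
  assumes [measurable]: "f \<in> borel_measurable borel" "g \<in> borel_measurable borel"
  shows "shift_sqdist (\<lambda>x. f x + g x) h \<le> 2 * shift_sqdist f h + 2 * shift_sqdist g h"
proof -
  have "shift_sqdist (\<lambda>x. f x + g x) h
      \<le> (\<integral>\<^sup>+x. 2 * ennreal ((f (x + h) - f x)\<^sup>2) + 2 * ennreal ((g (x + h) - g x)\<^sup>2) \<partial>lborel)"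
    unfolding shift_sqdist_def
    by (intro nn_integral_mono) (metis add_diff_add ennreal_power2_add_le)
  also have "\<dots> = 2 * shift_sqdist f h + 2 * shift_sqdist g h"
    unfolding shift_sqdist_def by (simp add: nn_integral_add nn_integral_cmult)
  finally show ?thesis .
qed

lemma shift_sqdist_approx_le:
  assumes [measurable]: "g \<in> borel_measurable borel" "u \<in> borel_measurable borel"
  shows "shift_sqdist g h \<le> 6 * (\<integral>\<^sup>+x. ennreal ((g x - u x)\<^sup>2) \<partial>lborel) + 3 * shift_sqdist u h"
proof -
  let ?E = "\<integral>\<^sup>+x. ennreal ((g x - u x)\<^sup>2) \<partial>lborel"
  have "shift_sqdist g h \<le> (\<integral>\<^sup>+x. 3 * ennreal ((g (x + h) - u (x + h))\<^sup>2)
      + 3 * ennreal ((u (x + h) - u x)\<^sup>2) + 3 * ennreal ((g x - u x)\<^sup>2) \<partial>lborel)"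
    unfolding shift_sqdist_def
  proof (intro nn_integral_mono)
    fix x
    show "ennreal ((g (x + h) - g x)\<^sup>2) \<le> 3 * ennreal ((g (x + h) - u (x + h))\<^sup>2)
        + 3 * ennreal ((u (x + h) - u x)\<^sup>2) + 3 * ennreal ((g x - u x)\<^sup>2)"
      using ennreal_power2_add3_le[of "g (x + h) - u (x + h)" "u (x + h) - u x" "u x - g x"]
      by (simp add: power2_commute[of "u x"])
  qed
  also have "\<dots> = 3 * (\<integral>\<^sup>+x. ennreal ((g (x + h) - u (x + h))\<^sup>2) \<partial>lborel) + 3 * shift_sqdist u h + 3 * ?E"
    unfolding shift_sqdist_def by (simp add: nn_integral_add nn_integral_cmult)
  also have "(\<integral>\<^sup>+x. ennreal ((g (x + h) - u (x + h))\<^sup>2) \<partial>lborel) = ?E"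
    by (rule nn_integral_lborel_translate[where f="\<lambda>x. ennreal ((g x - u x)\<^sup>2)"]) simp
  also have "3 * ?E + 3 * shift_sqdist u h + 3 * ?E = 6 * ?E + 3 * shift_sqdist u h"
    using distrib_right[of "3::ennreal" 3 ?E] by (simp add: add_ac)
  finally show ?thesis .
qed

lemma L2_shift_continuous_0: "L2_shift_continuous (\<lambda>x::'a::euclidean_space. 0)"
proof -
  have "shift_sqdist (\<lambda>x::'a. 0) = (\<lambda>h. 0)"
    by (simp add: fun_eq_iff shift_sqdist_def)
  then show ?thesis
    by (simp add: L2_shift_continuous_def)
qed

lemma L2_shift_continuous_add:
  assumes "L2_shift_continuous f" "L2_shift_continuous g"
  shows "L2_shift_continuous (\<lambda>x. f x + g x)"
proof -
  have [measurable]: "f \<in> borel_measurable borel" "g \<in> borel_measurable borel"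
    using assms by (auto simp: L2_shift_continuous_def)
  have "(\<integral>\<^sup>+x. ennreal ((f x + g x)\<^sup>2) \<partial>lborel)
      \<le> (\<integral>\<^sup>+x. 2 * ennreal ((f x)\<^sup>2) + 2 * ennreal ((g x)\<^sup>2) \<partial>lborel)"
    by (intro nn_integral_mono ennreal_power2_add_le)
  also have "\<dots> = 2 * (\<integral>\<^sup>+x. ennreal ((f x)\<^sup>2) \<partial>lborel) + 2 * (\<integral>\<^sup>+x. ennreal ((g x)\<^sup>2) \<partial>lborel)"
    by (simp add: nn_integral_add nn_integral_cmult)
  also have "\<dots> < \<infinity>"
    using assms by (simp add: L2_shift_continuous_def ennreal_mult_less_top)
  finally have "(\<integral>\<^sup>+x. ennreal ((f x + g x)\<^sup>2) \<partial>lborel) < \<infinity>" .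
  moreover have "(shift_sqdist (\<lambda>x. f x + g x) \<longlongrightarrow> 0) (at 0)"
  proof (rule tendsto_sandwich[of "\<lambda>_. 0" _ _ "\<lambda>h. 2 * shift_sqdist f h + 2 * shift_sqdist g h"])
    have "((\<lambda>h. 2 * shift_sqdist f h + 2 * shift_sqdist g h) \<longlongrightarrow> 2 * 0 + 2 * 0) (at 0)"
      by (intro tendsto_add ennreal_tendsto_cmult) (use assms in \<open>auto simp: L2_shift_continuous_def\<close>)
    then show "((\<lambda>h. 2 * shift_sqdist f h + 2 * shift_sqdist g h) \<longlongrightarrow> 0) (at 0)"
      by simp
  qed (auto simp: shift_sqdist_add_le)
  ultimately show ?thesis by (simp add: L2_shift_continuous_def)
qed

lemma L2_shift_continuous_cmult:
  assumes "L2_shift_continuous f"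
  shows "L2_shift_continuous (\<lambda>x. c * f x)"
proof -
  have [measurable]: "f \<in> borel_measurable borel"
    using assms by (auto simp: L2_shift_continuous_def)
  have norm: "(\<integral>\<^sup>+x. ennreal ((c * f x)\<^sup>2) \<partial>lborel) = ennreal (c\<^sup>2) * (\<integral>\<^sup>+x. ennreal ((f x)\<^sup>2) \<partial>lborel)"
    by (subst nn_integral_cmult[symmetric]) (auto simp: power_mult_distrib ennreal_mult)
  have shift: "shift_sqdist (\<lambda>x. c * f x) h = ennreal (c\<^sup>2) * shift_sqdist f h" for h
    unfolding shift_sqdist_def
    by (subst nn_integral_cmult[symmetric])
      (auto simp: power_mult_distrib ennreal_mult right_diff_distrib[symmetric])
  show ?thesis
    using assms ennreal_tendsto_cmult[of "ennreal (c\<^sup>2)" "shift_sqdist f" 0 "at 0"]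
    unfolding L2_shift_continuous_def norm shift
    by (auto simp: ennreal_mult_less_top)
qed

lemma L2_shift_continuous_sum:
  assumes "finite I" "\<And>i. i \<in> I \<Longrightarrow> L2_shift_continuous (f i)"
  shows "L2_shift_continuous (\<lambda>x. \<Sum>i\<in>I. f i x)"
  using assms
  by (induction I rule: finite_induct)
    (auto simp: L2_shift_continuous_0 intro: L2_shift_continuous_add)

lemma L2_shift_continuous_limit:
  assumes [measurable]: "g \<in> borel_measurable borel"
    and g2: "(\<integral>\<^sup>+x. ennreal ((g x)\<^sup>2) \<partial>lborel) < \<infinity>"
    and u: "\<And>n. L2_shift_continuous (u n)"
    and lim: "(\<lambda>n. \<integral>\<^sup>+x. ennreal ((g x - u n x)\<^sup>2) \<partial>lborel) \<longlonglongrightarrow> 0"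
  shows "L2_shift_continuous g"
proof -
  have "(shift_sqdist g \<longlongrightarrow> 0) (at 0)"
    unfolding ennreal_tendsto_0_iff_eventually_less
  proof safe
    fix e :: real assume "0 < e"
    then obtain n where n: "(\<integral>\<^sup>+x. ennreal ((g x - u n x)\<^sup>2) \<partial>lborel) < ennreal (e / 12)"
      using lim[unfolded ennreal_tendsto_0_iff_eventually_less, rule_format, of "e / 12"]
      by (auto simp: eventually_sequentially)
    have [measurable]: "u n \<in> borel_measurable borel"
      using u by (auto simp: L2_shift_continuous_def)
    have "eventually (\<lambda>h. shift_sqdist (u n) h < ennreal (e / 6)) (at 0)"
      using u[of n] \<open>0 < e\<close>
      unfolding L2_shift_continuous_def ennreal_tendsto_0_iff_eventually_less by auto
    then show "eventually (\<lambda>h. shift_sqdist g h < ennreal e) (at 0)"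
    proof (rule eventually_mono)
      fix h assume h: "shift_sqdist (u n) h < ennreal (e / 6)"
      have "shift_sqdist g h \<le> 6 * (\<integral>\<^sup>+x. ennreal ((g x - u n x)\<^sup>2) \<partial>lborel) + 3 * shift_sqdist (u n) h"
        by (rule shift_sqdist_approx_le) auto
      also have "\<dots> < 6 * ennreal (e / 12) + 3 * ennreal (e / 6)"
        by (intro add_strict_mono ennreal_mult_strict_left_mono n h) auto
      also have "\<dots> = ennreal e"
        using \<open>0 < e\<close>
        by (subst (1 2) ennreal_numeral[symmetric])
          (simp add: ennreal_mult[symmetric] ennreal_plus[symmetric] del: ennreal_numeral ennreal_plus)
      finally show "shift_sqdist g h < ennreal e" .
    qed
  qed
  then show ?thesis
    using g2 by (simp add: L2_shift_continuous_def)
qed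

lemma indicator_shift_diff_le:
  fixes S :: "'a::real_normed_vector set"
  assumes "\<And>x. x \<in> S \<Longrightarrow> norm x \<le> R" and "norm h \<le> B"
  shows "ennreal ((indicator S (x + h) - indicator S x :: real)\<^sup>2) \<le> indicator (cball 0 (R + B)) x"
proof (cases "R + B < norm x")
  case True
  have "norm x \<le> norm (x + h) + B"
    using norm_triangle_ineq4[of "x + h" h] assms(2) by simp
  moreover have "0 \<le> B"
    using assms(2) norm_ge_zero[of h] by linarith
  ultimately have "x \<notin> S" "x + h \<notin> S"
    using assms(1)[of x] assms(1)[of "x + h"] True by force+
  then show ?thesis
    by simp
qed (auto simp: indicator_def)

lemma L2_shift_continuous_indicator_null_frontier:
  fixes S :: "'a::euclidean_space set"
  assumes [measurable]: "S \<in> sets borel"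
    and "bounded S" and frontier: "AE x in lborel. x \<notin> frontier S"
  shows "L2_shift_continuous (indicator S :: 'a \<Rightarrow> real)"
proof -
  let ?I = "indicator S :: 'a \<Rightarrow> real"
  have "(\<lambda>x. ennreal ((?I x)\<^sup>2)) = indicator S"
    by (auto simp: fun_eq_iff indicator_def)
  then have finite: "(\<integral>\<^sup>+x. ennreal ((?I x)\<^sup>2) \<partial>lborel) < \<infinity>"
    using emeasure_bounded_finite[OF \<open>bounded S\<close>] by (simp only:) simp
  obtain R where R: "\<And>x. x \<in> S \<Longrightarrow> norm x \<le> R"
    using \<open>bounded S\<close> unfolding bounded_iff by blast
  have "(shift_sqdist ?I \<longlongrightarrow> 0) (at 0)"
  proof (rule tendsto_at_sequentiallyI)
    fix X :: "nat \<Rightarrow> 'a" assume X: "X \<longlonglongrightarrow> 0"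
    then obtain B where B: "\<And>n. norm (X n) \<le> B"
      using convergent_imp_bounded[of X] by (auto simp: bounded_iff convergent_def)
    let ?w = "indicator (cball 0 (R + B)) :: 'a \<Rightarrow> ennreal"
    have "(\<lambda>n. \<integral>\<^sup>+x. ennreal ((?I (x + X n) - ?I x)\<^sup>2) \<partial>lborel) \<longlonglongrightarrow> (\<integral>\<^sup>+(x::'a). 0 \<partial>lborel)"
    proof (rule nn_integral_dominated_convergence[where w="?w"])
      show "(\<integral>\<^sup>+x. ?w x \<partial>lborel) < \<infinity>"
        using emeasure_bounded_finite[of "cball (0::'a) (R + B)"] by simp
      show "AE x in lborel. ennreal ((?I (x + X n) - ?I x)\<^sup>2) \<le> ?w x" for n
      proof (rule AE_I2)
        fix x :: 'a
        show "ennreal ((?I (x + X n) - ?I x)\<^sup>2) \<le> ?w x"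
          by (rule indicator_shift_diff_le[OF R B])
      qed
      show "AE x in lborel. (\<lambda>n. ennreal ((?I (x + X n) - ?I x)\<^sup>2)) \<longlonglongrightarrow> 0"
        using frontier
      proof eventually_elim
        case (elim x)
        have shift: "(\<lambda>n. x + X n) \<longlonglongrightarrow> x"
          using tendsto_add[OF tendsto_const X, of x] by simp
        have "isCont ?I x"
          using elim by (simp add: isCont_indicator)
        from isCont_tendsto_compose[OF this shift]
        have "(\<lambda>n. ?I (x + X n)) \<longlonglongrightarrow> ?I x" .
        then have "(\<lambda>n. (?I (x + X n) - ?I x)\<^sup>2) \<longlonglongrightarrow> (?I x - ?I x)\<^sup>2"
          by (intro tendsto_intros)
        then have "(\<lambda>n. ennreal ((?I (x + X n) - ?I x)\<^sup>2)) \<longlonglongrightarrow> ennreal ((?I x - ?I x)\<^sup>2)"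
          by (rule tendsto_ennrealI)
        then show ?case by simp
      qed
    qed (measurable, simp add: pred_def borel_closed)
    then show "(\<lambda>n. shift_sqdist ?I (X n)) \<longlonglongrightarrow> 0"
      by (simp add: shift_sqdist_def)
  qed
  with finite show ?thesis
    by (simp add: L2_shift_continuous_def)
qed

lemma L2_shift_continuous_indicator_box:
  "L2_shift_continuous (indicator (box a b) :: 'a::euclidean_space \<Rightarrow> real)"
proof (rule L2_shift_continuous_indicator_null_frontier)
  show "AE x in lborel. x \<notin> frontier (box a b)"
    using AE_not_in[OF null_sets_cbox_Diff_box[of a b]] by (simp add: frontier_box)
qed auto

lemma L2_shift_continuous_indicator_disjoint_UN:
  fixes A :: "nat \<Rightarrow> 'a::euclidean_space set"
  assumes "disjoint_family A" and [measurable]: "\<And>i. A i \<in> sets borel" "K \<in> sets borel"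
    and "emeasure lborel K < \<infinity>" and A: "\<And>i. L2_shift_continuous (indicator (A i \<inter> K))"
  shows "L2_shift_continuous (indicator ((\<Union>i. A i) \<inter> K) :: 'a \<Rightarrow> real)"
proof -
  let ?g = "indicator ((\<Union>i. A i) \<inter> K) :: 'a \<Rightarrow> real"
  define u :: "nat \<Rightarrow> 'a \<Rightarrow> real" where "u n = indicator ((\<Union>i<n. A i) \<inter> K)" for n
  have "u n = (\<lambda>x. \<Sum>i<n. indicator (A i \<inter> K) x :: real)" for n
  proof -
    have "disjoint_family_on (\<lambda>i. A i \<inter> K) {..<n}"
      using \<open>disjoint_family A\<close> by (auto simp: disjoint_family_on_def)
    then show ?thesis
      unfolding u_def by (subst indicator_UN_disjoint[symmetric]) (auto simp: Int_UN_distrib2)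
  qed
  then have u: "L2_shift_continuous (u n)" for n
    by (simp add: L2_shift_continuous_sum A)
  have "(\<integral>\<^sup>+x. ennreal ((?g x)\<^sup>2) \<partial>lborel) \<le> (\<integral>\<^sup>+x. indicator K x \<partial>lborel)"
    by (intro nn_integral_mono) (auto simp: indicator_def)
  then have g2: "(\<integral>\<^sup>+x. ennreal ((?g x)\<^sup>2) \<partial>lborel) < \<infinity>"
    using \<open>emeasure lborel K < \<infinity>\<close> by (simp add: le_less_trans)
  have "(\<lambda>n. u n x) \<longlonglongrightarrow> ?g x" for x
  proof (rule tendsto_eventually)
    show "eventually (\<lambda>n. u n x = ?g x) sequentially"
    proof (cases "x \<in> (\<Union>i. A i)")
      case True
      then obtain j where "x \<in> A j"
        by auto
      then show ?thesis
        unfolding eventually_sequentially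
        by (intro exI[of _ "Suc j"]) (auto simp: u_def indicator_def)
    qed (auto simp: u_def indicator_def)
  qed
  moreover have "\<bar>u n x\<bar> \<le> 1 * \<bar>?g x\<bar>" for n x
    by (auto simp: u_def indicator_def)
  moreover have "?g \<in> borel_measurable borel" "u n \<in> borel_measurable borel" for n
    unfolding u_def by measurable
  ultimately have "(\<lambda>n. \<integral>\<^sup>+x. ennreal ((?g x - u n x)\<^sup>2) \<partial>lborel) \<longlonglongrightarrow> 0"
    using nn_integral_square_diff_LIMSEQ_0[of ?g lborel u 1] g2 by simp
  then show ?thesis
    using L2_shift_continuous_limit[of ?g u] g2 u by simp
qed

lemma L2_shift_continuous_indicator_Int_box:
  fixes c d :: "'a::euclidean_space"
  assumes "A \<in> sets borel"
  shows "L2_shift_continuous (indicator (A \<inter> box c d) :: 'a \<Rightarrow> real)"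
proof -
  let ?K = "box c d"
  let ?G = "range (\<lambda>(a, b). box a b :: 'a set)"
  have sigma_G: "sigma_sets UNIV ?G = sets borel"
    by (simp add: borel_eq_box)
  have "Int_stable ?G"
    by (auto simp: Int_stable_def box_Int_box)
  moreover have "?G \<subseteq> Pow UNIV"
    by auto
  moreover have "A \<in> sigma_sets UNIV ?G"
    using assms sigma_G by simp
  ultimately show ?thesis
  proof (induction rule: sigma_sets_induct_disjoint)
    case (basic A)
    then show ?case
      by (auto simp: box_Int_box L2_shift_continuous_indicator_box)
  next
    case empty
    show ?case
      using L2_shift_continuous_0 by (simp add: fun_eq_iff)
  next
    case (compl A)
    have "indicator ((UNIV - A) \<inter> ?K) = (\<lambda>x. indicator ?K x + (-1) * indicator (A \<inter> ?K) x :: real)"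
      by (auto simp: fun_eq_iff indicator_def)
    then show ?case
      using L2_shift_continuous_add[OF L2_shift_continuous_indicator_box
          L2_shift_continuous_cmult[OF compl.IH, of "-1"]]
      by simp
  next
    case (union A)
    then show ?case
      using emeasure_lborel_box_finite[of c d] sigma_G
      by (intro L2_shift_continuous_indicator_disjoint_UN) auto
  qed
qed

lemma L2_shift_continuous_indicator:
  fixes S :: "'a::euclidean_space set"
  assumes "S \<in> sets borel" "bounded S"
  shows "L2_shift_continuous (indicator S :: 'a \<Rightarrow> real)"
proof -
  obtain c where "S \<subseteq> box (-c) c"
    using bounded_subset_box_symmetric[OF assms(2)] by blast
  then have "S = S \<inter> box (-c) c"
    by blast
  then show ?thesis
    using L2_shift_continuous_indicator_Int_box[OF assms(1)] by metis
qed

lemma tendsto_shift_sqdist_0: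
  fixes g :: "'a::euclidean_space \<Rightarrow> real"
  assumes [measurable]: "g \<in> borel_measurable borel"
    and finite: "(\<integral>\<^sup>+x. ennreal ((g x)\<^sup>2) \<partial>lborel) < \<infinity>"
  shows "(shift_sqdist g \<longlongrightarrow> 0) (at 0)"
proof -
  obtain F where F: "\<And>i. simple_function borel (F i)" "\<And>x. (\<lambda>i. F i x) \<longlonglongrightarrow> g x"
      "\<And>i x. dist (F i x) 0 \<le> 2 * dist (g x) 0"
    using borel_measurable_implies_sequence_metric[of g borel 0] by auto
  have [measurable]: "F i \<in> borel_measurable borel" for i
    using F(1) by (rule borel_measurable_simple_function)
  define u where "u i x = F i x * indicator (ball 0 (real i)) x" for i x
  have [measurable]: "u i \<in> borel_measurable borel" for i
    unfolding u_def by measurable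
  have u: "L2_shift_continuous (u i)" for i
  proof -
    have "finite (range (F i))"
      using F(1)[of i] by (simp add: simple_function_def)
    then have "u i = (\<lambda>x. \<Sum>v\<in>range (F i). v * indicator (F i -` {v} \<inter> ball 0 (real i)) x)"
      by (simp add: fun_eq_iff u_def simple_function_mult_indicator_eq_sum)
    moreover have "F i -` {v} \<in> sets borel" for v
      using simple_functionD(2)[OF F(1)[of i], of "{v}"] by simp
    ultimately show ?thesis
      using \<open>finite (range (F i))\<close>
      by (simp only:)
        (intro L2_shift_continuous_sum L2_shift_continuous_cmult L2_shift_continuous_indicator;
          simp add: bounded_Int)
  qed
  have "(\<lambda>i. u i x) \<longlonglongrightarrow> g x" for x
  proof -
    obtain N :: nat where N: "norm x < N"
      using reals_Archimedean2 by blast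
    have "eventually (\<lambda>i. F i x = u i x) sequentially"
      using eventually_ge_at_top[of N] by eventually_elim (use N in \<open>auto simp: u_def\<close>)
    then show ?thesis
      by (rule Lim_transform_eventually[OF F(2)])
  qed
  moreover have "\<bar>u i x\<bar> \<le> 2 * \<bar>g x\<bar>" for i x
    using F(3)[of i x] by (auto simp: u_def indicator_def)
  ultimately have "(\<lambda>i. \<integral>\<^sup>+x. ennreal ((g x - u i x)\<^sup>2) \<partial>lborel) \<longlonglongrightarrow> 0"
    by (intro nn_integral_square_diff_LIMSEQ_0[OF _ _ finite]) auto
  then have "L2_shift_continuous g"
    using L2_shift_continuous_limit[OF _ finite u] by simp
  then show ?thesis
    by (simp add: L2_shift_continuous_def)
qed

lemma nn_integral_weighted_shift_le:
  fixes G a :: "'a::euclidean_space \<Rightarrow> real"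
  assumes [measurable]: "G \<in> borel_measurable borel" "a \<in> borel_measurable borel"
      "\<Lambda> \<in> sets borel" "B \<in> sets borel"
    and a_nonneg: "\<And>y. 0 \<le> a y" and G_nonneg: "\<And>z. 0 \<le> G z"
    and shift_in: "\<And>x y. x \<in> \<Lambda> \<Longrightarrow> a y \<noteq> 0 \<Longrightarrow> x + \<epsilon> *\<^sub>R y \<in> B"
  shows "(\<integral>\<^sup>+x\<in>\<Lambda>. (\<integral>\<^sup>+y. ennreal (a y * G (x + \<epsilon> *\<^sub>R y)) \<partial>lborel) \<partial>lborel)
         \<le> (\<integral>\<^sup>+y. ennreal (a y) \<partial>lborel) * (\<integral>\<^sup>+z\<in>B. ennreal (G z) \<partial>lborel)"
proof -
  let ?K = "\<integral>\<^sup>+z\<in>B. ennreal (G z) \<partial>lborel"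
  have "(\<integral>\<^sup>+x\<in>\<Lambda>. (\<integral>\<^sup>+y. ennreal (a y * G (x + \<epsilon> *\<^sub>R y)) \<partial>lborel) \<partial>lborel)
      = (\<integral>\<^sup>+y. (\<integral>\<^sup>+x. ennreal (a y * G (x + \<epsilon> *\<^sub>R y)) * indicator \<Lambda> x \<partial>lborel) \<partial>lborel)"
    by (simp add: nn_integral_multc lborel_pair.Fubini'[symmetric])
  also have "\<dots> \<le> (\<integral>\<^sup>+y. ennreal (a y) *
      (\<integral>\<^sup>+x. ennreal (G (x + \<epsilon> *\<^sub>R y)) * indicator B (x + \<epsilon> *\<^sub>R y) \<partial>lborel) \<partial>lborel)"
  proof (intro nn_integral_mono)
    fix y :: 'a
    have "(\<integral>\<^sup>+x. ennreal (a y * G (x + \<epsilon> *\<^sub>R y)) * indicator \<Lambda> x \<partial>lborel)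
        \<le> (\<integral>\<^sup>+x. ennreal (a y) * (ennreal (G (x + \<epsilon> *\<^sub>R y)) * indicator B (x + \<epsilon> *\<^sub>R y)) \<partial>lborel)"
      using shift_in a_nonneg[of y] G_nonneg
      by (intro nn_integral_mono) (auto simp: indicator_def ennreal_mult)
    then show "(\<integral>\<^sup>+x. ennreal (a y * G (x + \<epsilon> *\<^sub>R y)) * indicator \<Lambda> x \<partial>lborel)
        \<le> ennreal (a y) * (\<integral>\<^sup>+x. ennreal (G (x + \<epsilon> *\<^sub>R y)) * indicator B (x + \<epsilon> *\<^sub>R y) \<partial>lborel)"
      by (simp add: nn_integral_cmult)
  qed
  also have "\<dots> = (\<integral>\<^sup>+y. ennreal (a y) * ?K \<partial>lborel)"
    by (subst nn_integral_lborel_translate[where f="\<lambda>z. ennreal (G z) * indicator B z"]) simp_all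
  also have "\<dots> = (\<integral>\<^sup>+y. ennreal (a y) \<partial>lborel) * ?K"
    by (rule nn_integral_multc) measurable
  finally show ?thesis .
qed

lemma nn_integral_weighted_shift_diff_le:
  fixes G g a :: "'a::euclidean_space \<Rightarrow> real"
  assumes [measurable]: "g \<in> borel_measurable borel" "a \<in> borel_measurable borel" "\<Lambda> \<in> sets borel"
    and a_nonneg: "\<And>y. 0 \<le> a y"
    and agree: "\<And>x y. x \<in> \<Lambda> \<Longrightarrow> a y \<noteq> 0 \<Longrightarrow> G (x + \<epsilon> *\<^sub>R y) = g (x + \<epsilon> *\<^sub>R y) \<and> G x = g x"
  shows "(\<integral>\<^sup>+x\<in>\<Lambda>. (\<integral>\<^sup>+y. ennreal (a y * (G (x + \<epsilon> *\<^sub>R y) - G x)\<^sup>2) \<partial>lborel) \<partial>lborel)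
         \<le> (\<integral>\<^sup>+y. ennreal (a y) * shift_sqdist g (\<epsilon> *\<^sub>R y) \<partial>lborel)"
proof -
  have "(\<integral>\<^sup>+x\<in>\<Lambda>. (\<integral>\<^sup>+y. ennreal (a y * (G (x + \<epsilon> *\<^sub>R y) - G x)\<^sup>2) \<partial>lborel) \<partial>lborel)
      = (\<integral>\<^sup>+x\<in>\<Lambda>. (\<integral>\<^sup>+y. ennreal (a y * (g (x + \<epsilon> *\<^sub>R y) - g x)\<^sup>2) \<partial>lborel) \<partial>lborel)"
  proof (intro nn_integral_cong)
    fix x :: 'a
    have "x \<in> \<Lambda> \<Longrightarrow> (\<integral>\<^sup>+y. ennreal (a y * (G (x + \<epsilon> *\<^sub>R y) - G x)\<^sup>2) \<partial>lborel)
        = (\<integral>\<^sup>+y. ennreal (a y * (g (x + \<epsilon> *\<^sub>R y) - g x)\<^sup>2) \<partial>lborel)"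
      using agree by (intro nn_integral_cong) (metis mult_zero_left)
    then show "(\<integral>\<^sup>+y. ennreal (a y * (G (x + \<epsilon> *\<^sub>R y) - G x)\<^sup>2) \<partial>lborel) * indicator \<Lambda> x
        = (\<integral>\<^sup>+y. ennreal (a y * (g (x + \<epsilon> *\<^sub>R y) - g x)\<^sup>2) \<partial>lborel) * indicator \<Lambda> x"
      by (cases "x \<in> \<Lambda>") simp_all
  qed
  also have "\<dots> = (\<integral>\<^sup>+y. (\<integral>\<^sup>+x. ennreal (a y * (g (x + \<epsilon> *\<^sub>R y) - g x)\<^sup>2) * indicator \<Lambda> x \<partial>lborel) \<partial>lborel)"
    by (simp add: nn_integral_multc lborel_pair.Fubini'[symmetric])
  also have "\<dots> \<le> (\<integral>\<^sup>+y. (\<integral>\<^sup>+x. ennreal (a y) * ennreal ((g (x + \<epsilon> *\<^sub>R y) - g x)\<^sup>2) \<partial>lborel) \<partial>lborel)"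
    by (intro nn_integral_mono) (auto simp: indicator_def ennreal_mult a_nonneg)
  also have "\<dots> = (\<integral>\<^sup>+y. ennreal (a y) * shift_sqdist g (\<epsilon> *\<^sub>R y) \<partial>lborel)"
    unfolding shift_sqdist_def by (simp add: nn_integral_cmult)
  finally show ?thesis .
qed

lemma weighted_shift_sqdist_LIMSEQ_0:
  fixes g a :: "'a::euclidean_space \<Rightarrow> real"
  assumes [measurable]: "g \<in> borel_measurable borel" "a \<in> borel_measurable borel"
    and g_finite: "(\<integral>\<^sup>+x. ennreal ((g x)\<^sup>2) \<partial>lborel) < \<infinity>"
    and a_finite: "(\<integral>\<^sup>+y. ennreal (a y) \<partial>lborel) < \<infinity>"
    and X: "X \<longlonglongrightarrow> 0"
  shows "(\<lambda>n. \<integral>\<^sup>+y. ennreal (a y) * shift_sqdist g (X n *\<^sub>R y) \<partial>lborel) \<longlonglongrightarrow> 0"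
proof -
  let ?N = "\<integral>\<^sup>+z. ennreal ((g z)\<^sup>2) \<partial>lborel"
  have "(\<lambda>h. \<integral>\<^sup>+x. ennreal ((g (x + h) - g x)\<^sup>2) \<partial>lborel) \<in> borel_measurable lborel"
    by measurable
  then have [measurable]: "shift_sqdist g \<in> borel_measurable borel"
    by (simp add: shift_sqdist_def[abs_def])
  have "isCont (shift_sqdist g) 0"
    using tendsto_shift_sqdist_0[OF _ g_finite] by (simp add: isCont_def)
  have "(\<lambda>n. \<integral>\<^sup>+y. ennreal (a y) * shift_sqdist g (X n *\<^sub>R y) \<partial>lborel) \<longlonglongrightarrow> (\<integral>\<^sup>+(y::'a). 0 \<partial>lborel)"
  proof (rule nn_integral_dominated_convergence[where w="\<lambda>y. ennreal (a y) * (4 * ?N)"])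
    show "AE y in lborel. ennreal (a y) * shift_sqdist g (X n *\<^sub>R y) \<le> ennreal (a y) * (4 * ?N)" for n
      by (intro AE_I2 mult_left_mono shift_sqdist_le) auto
    show "(\<integral>\<^sup>+y. ennreal (a y) * (4 * ?N) \<partial>lborel) < \<infinity>"
      using a_finite g_finite by (simp add: nn_integral_multc ennreal_mult_less_top)
    show "AE y in lborel. (\<lambda>n. ennreal (a y) * shift_sqdist g (X n *\<^sub>R y)) \<longlonglongrightarrow> 0"
    proof (rule AE_I2)
      fix y :: 'a
      have "(\<lambda>n. X n *\<^sub>R y) \<longlonglongrightarrow> 0"
        using tendsto_scaleR[OF X tendsto_const[of y]] by simp
      from isCont_tendsto_compose[OF \<open>isCont (shift_sqdist g) 0\<close> this]
      have "(\<lambda>n. ennreal (a y) * shift_sqdist g (X n *\<^sub>R y)) \<longlonglongrightarrow> ennreal (a y) * 0"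
        by (intro ennreal_tendsto_cmult) auto
      then show "(\<lambda>n. ennreal (a y) * shift_sqdist g (X n *\<^sub>R y)) \<longlonglongrightarrow> 0"
        by simp
    qed
  qed measurable
  then show ?thesis
    by simp
qed

section \<open>Random fields with bounded second moments\<close>

context
  fixes F :: "'a::euclidean_space \<Rightarrow> 'g \<Rightarrow> real" and \<mu> :: "'g measure" and M :: real
    and a :: "'a \<Rightarrow> real" and \<Lambda> :: "'a set"
  assumes sigma_finite: "sigma_finite_measure \<mu>"
    and F_measurable [measurable]: "(\<lambda>(x, \<gamma>). F x \<gamma>) \<in> borel_measurable (lborel \<Otimes>\<^sub>M \<mu>)"
    and second_moment: "AE x in lborel. (\<integral>\<^sup>+\<gamma>. ennreal ((F x \<gamma>)\<^sup>2) \<partial>\<mu>) \<le> ennreal M"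
    and a_measurable [measurable]: "a \<in> borel_measurable borel"
    and a_nonneg: "\<And>y. 0 \<le> a y"
    and a_finite: "(\<integral>\<^sup>+y. ennreal (a y) \<partial>lborel) < \<infinity>"
    and a_support: "bounded {y. a y \<noteq> 0}"
    and \<Lambda>_borel [measurable]: "\<Lambda> \<in> sets borel" and \<Lambda>_bounded: "bounded \<Lambda>"
begin

interpretation pair_sigma_finite lborel \<mu>
  using sigma_finite by (simp add: pair_sigma_finite_def lborel.sigma_finite_measure_axioms)

lemma F_section_measurable [measurable]:
  "\<gamma> \<in> space \<mu> \<Longrightarrow> (\<lambda>z. F z \<gamma>) \<in> borel_measurable borel"
  using measurable_comp[OF measurable_Pair2'[of \<gamma> \<mu> lborel] F_measurable]
  by (simp add: comp_def)

lemma F_measurable_swap [measurable]: "(\<lambda>(\<gamma>, x). F x \<gamma>) \<in> borel_measurable (\<mu> \<Otimes>\<^sub>M lborel)"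
  using measurable_pair_swap[OF F_measurable] by simp

lemma nn_integral_local_square_finite:
  assumes [measurable]: "B \<in> sets borel" and "bounded B"
  shows "(\<integral>\<^sup>+\<gamma>. (\<integral>\<^sup>+x\<in>B. ennreal ((F x \<gamma>)\<^sup>2) \<partial>lborel) \<partial>\<mu>) < \<infinity>"
proof -
  have "(\<integral>\<^sup>+\<gamma>. (\<integral>\<^sup>+x\<in>B. ennreal ((F x \<gamma>)\<^sup>2) \<partial>lborel) \<partial>\<mu>)
      = (\<integral>\<^sup>+x. (\<integral>\<^sup>+\<gamma>. ennreal ((F x \<gamma>)\<^sup>2) \<partial>\<mu>) * indicator B x \<partial>lborel)"
    by (subst Fubini'[where f="\<lambda>x \<gamma>. ennreal ((F x \<gamma>)\<^sup>2) * indicator B x"])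
      (simp_all add: nn_integral_multc)
  also have "\<dots> \<le> (\<integral>\<^sup>+x. ennreal M * indicator B x \<partial>lborel)"
    using second_moment by (intro nn_integral_mono_AE) (auto elim!: eventually_mono intro: mult_right_mono)
  also have "\<dots> = ennreal M * emeasure lborel B"
    by (simp add: nn_integral_cmult_indicator)
  also have "\<dots> < \<infinity>"
    using emeasure_bounded_finite[OF \<open>bounded B\<close>] by (simp add: ennreal_mult_less_top)
  finally show ?thesis .
qed

lemma bounded_superset_of_shifts:
  obtains B where "B \<in> sets borel" "bounded B" "\<Lambda> \<subseteq> B"
    "\<And>x y e. x \<in> \<Lambda> \<Longrightarrow> a y \<noteq> 0 \<Longrightarrow> \<bar>e\<bar> \<le> E \<Longrightarrow> x + e *\<^sub>R y \<in> B"
proof -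
  obtain Ra where "0 < Ra" and Ra: "\<And>y. a y \<noteq> 0 \<Longrightarrow> norm y \<le> Ra"
    using a_support unfolding bounded_pos by auto
  obtain Rl where Rl: "\<And>x. x \<in> \<Lambda> \<Longrightarrow> norm x \<le> Rl"
    using \<Lambda>_bounded unfolding bounded_iff by auto
  show thesis
  proof (rule that[of "ball 0 (Rl + \<bar>E\<bar> * Ra + 1)"])
    show "\<Lambda> \<subseteq> ball 0 (Rl + \<bar>E\<bar> * Ra + 1)"
      using add_scaleR_mem_ball[OF Rl, of _ 0 Ra 0 "\<bar>E\<bar>"] \<open>0 < Ra\<close> by auto
    show "x + e *\<^sub>R y \<in> ball 0 (Rl + \<bar>E\<bar> * Ra + 1)" if "x \<in> \<Lambda>" "a y \<noteq> 0" "\<bar>e\<bar> \<le> E" for x y e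
      using that \<open>0 < Ra\<close> by (intro add_scaleR_mem_ball Rl Ra) auto
  qed simp_all
qed

lemma weighted_shift_square_finite:
  "(\<integral>\<^sup>+\<gamma>. (\<integral>\<^sup>+x\<in>\<Lambda>. (\<integral>\<^sup>+y. ennreal (a y * (F (x + \<epsilon> *\<^sub>R y) \<gamma>)\<^sup>2) \<partial>lborel) \<partial>lborel) \<partial>\<mu>) < \<infinity>"
proof -
  obtain B where B_borel [measurable]: "B \<in> sets borel" and "bounded B" "\<Lambda> \<subseteq> B"
    and shift_in: "\<And>x y e. x \<in> \<Lambda> \<Longrightarrow> a y \<noteq> 0 \<Longrightarrow> \<bar>e\<bar> \<le> \<bar>\<epsilon>\<bar> \<Longrightarrow> x + e *\<^sub>R y \<in> B"
    by (rule bounded_superset_of_shifts[of "\<bar>\<epsilon>\<bar>"]) auto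
  let ?K = "\<lambda>\<gamma>. \<integral>\<^sup>+z\<in>B. ennreal ((F z \<gamma>)\<^sup>2) \<partial>lborel"
  have "(\<integral>\<^sup>+\<gamma>. (\<integral>\<^sup>+x\<in>\<Lambda>. (\<integral>\<^sup>+y. ennreal (a y * (F (x + \<epsilon> *\<^sub>R y) \<gamma>)\<^sup>2) \<partial>lborel) \<partial>lborel) \<partial>\<mu>)
      \<le> (\<integral>\<^sup>+\<gamma>. (\<integral>\<^sup>+y. ennreal (a y) \<partial>lborel) * ?K \<gamma> \<partial>\<mu>)"
    by (intro nn_integral_mono nn_integral_weighted_shift_le[where G="\<lambda>z. (F z \<gamma>)\<^sup>2" for \<gamma>])
      (use shift_in[OF _ _ order_refl] a_nonneg in auto)
  also have "\<dots> = (\<integral>\<^sup>+y. ennreal (a y) \<partial>lborel) * (\<integral>\<^sup>+\<gamma>. ?K \<gamma> \<partial>\<mu>)"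
    by (rule nn_integral_cmult) measurable
  also have "\<dots> < \<infinity>"
    using a_finite nn_integral_local_square_finite[OF B_borel \<open>bounded B\<close>]
    by (simp add: ennreal_mult_less_top)
  finally show ?thesis .
qed

lemma weighted_shift_square_diff_le_restrict:
  assumes [measurable]: "B \<in> sets borel" and "\<Lambda> \<subseteq> B"
    and shift_in: "\<And>x y. x \<in> \<Lambda> \<Longrightarrow> a y \<noteq> 0 \<Longrightarrow> x + \<epsilon> *\<^sub>R y \<in> B"
    and "\<gamma> \<in> space \<mu>"
  shows "(\<integral>\<^sup>+x\<in>\<Lambda>. (\<integral>\<^sup>+y. ennreal (a y * (F (x + \<epsilon> *\<^sub>R y) \<gamma> - F x \<gamma>)\<^sup>2) \<partial>lborel) \<partial>lborel)
    \<le> (\<integral>\<^sup>+y. ennreal (a y) * shift_sqdist (\<lambda>z. F z \<gamma> * indicator B z) (\<epsilon> *\<^sub>R y) \<partial>lborel)"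
proof (rule nn_integral_weighted_shift_diff_le)
  show "(\<lambda>z. F z \<gamma> * indicator B z) \<in> borel_measurable borel"
    using \<open>\<gamma> \<in> space \<mu>\<close> by measurable
qed (use assms a_nonneg in auto)

lemma weighted_shift_square_diff_LIMSEQ_0:
  assumes X: "X \<longlonglongrightarrow> 0" and X_bounded: "\<And>n. \<bar>X n\<bar> \<le> E"
  shows "(\<lambda>n. \<integral>\<^sup>+\<gamma>. (\<integral>\<^sup>+x\<in>\<Lambda>. (\<integral>\<^sup>+y.
           ennreal (a y * (F (x + X n *\<^sub>R y) \<gamma> - F x \<gamma>)\<^sup>2) \<partial>lborel) \<partial>lborel) \<partial>\<mu>) \<longlonglongrightarrow> 0"
proof -
  obtain B where B_borel [measurable]: "B \<in> sets borel" and "bounded B" "\<Lambda> \<subseteq> B"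
    and shift_in: "\<And>x y e. x \<in> \<Lambda> \<Longrightarrow> a y \<noteq> 0 \<Longrightarrow> \<bar>e\<bar> \<le> E \<Longrightarrow> x + e *\<^sub>R y \<in> B"
    by (rule bounded_superset_of_shifts[of E]) auto
  define g where "g \<gamma> z = F z \<gamma> * indicator B z" for \<gamma> z
  define K where "K \<gamma> = (\<integral>\<^sup>+z\<in>B. ennreal ((F z \<gamma>)\<^sup>2) \<partial>lborel)" for \<gamma>
  define q where "q n \<gamma> = (\<integral>\<^sup>+x\<in>\<Lambda>. (\<integral>\<^sup>+y.
      ennreal (a y * (F (x + X n *\<^sub>R y) \<gamma> - F x \<gamma>)\<^sup>2) \<partial>lborel) \<partial>lborel)" for n \<gamma>
  let ?Na = "\<integral>\<^sup>+y. ennreal (a y) \<partial>lborel"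
  have [measurable]: "g \<gamma> \<in> borel_measurable borel" if "\<gamma> \<in> space \<mu>" for \<gamma>
    using that unfolding g_def by measurable
  have g_square: "(\<integral>\<^sup>+z. ennreal ((g \<gamma> z)\<^sup>2) \<partial>lborel) = K \<gamma>" for \<gamma>
    unfolding g_def K_def by (intro nn_integral_cong) (auto simp: indicator_def)
  have K_finite: "(\<integral>\<^sup>+\<gamma>. K \<gamma> \<partial>\<mu>) < \<infinity>"
    unfolding K_def by (rule nn_integral_local_square_finite[OF B_borel \<open>bounded B\<close>])
  have q_le: "q n \<gamma> \<le> (\<integral>\<^sup>+y. ennreal (a y) * shift_sqdist (g \<gamma>) (X n *\<^sub>R y) \<partial>lborel)"
    if "\<gamma> \<in> space \<mu>" for n \<gamma>
    unfolding q_def g_def[abs_def]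
    by (rule weighted_shift_square_diff_le_restrict[OF B_borel \<open>\<Lambda> \<subseteq> B\<close> shift_in[OF _ _ X_bounded] that])
  have dominated: "q n \<gamma> \<le> ?Na * (4 * K \<gamma>)" if "\<gamma> \<in> space \<mu>" for n \<gamma>
  proof -
    have "q n \<gamma> \<le> (\<integral>\<^sup>+y. ennreal (a y) * shift_sqdist (g \<gamma>) (X n *\<^sub>R y) \<partial>lborel)"
      by (rule q_le[OF that])
    also have "\<dots> \<le> (\<integral>\<^sup>+y. ennreal (a y) * (4 * K \<gamma>) \<partial>lborel)"
      using shift_sqdist_le[of "g \<gamma>", unfolded g_square] that
      by (intro nn_integral_mono mult_left_mono) auto
    finally show ?thesis
      by (simp add: nn_integral_multc)
  qed
  have "AE \<gamma> in \<mu>. K \<gamma> \<noteq> \<infinity>"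
    using K_finite by (intro nn_integral_PInf_AE) (auto simp: K_def)
  then have pointwise: "AE \<gamma> in \<mu>. (\<lambda>n. q n \<gamma>) \<longlonglongrightarrow> 0"
  proof (rule AE_mp[OF _ AE_I2], intro impI)
    fix \<gamma> assume "\<gamma> \<in> space \<mu>" and "K \<gamma> \<noteq> \<infinity>"
    then have "(\<lambda>n. \<integral>\<^sup>+y. ennreal (a y) * shift_sqdist (g \<gamma>) (X n *\<^sub>R y) \<partial>lborel) \<longlonglongrightarrow> 0"
      using a_finite X by (intro weighted_shift_sqdist_LIMSEQ_0) (auto simp: g_square top.not_eq_extremum)
    then show "(\<lambda>n. q n \<gamma>) \<longlonglongrightarrow> 0"
      using q_le[OF \<open>\<gamma> \<in> space \<mu>\<close>] by (auto intro: tendsto_sandwich[rotated 2])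
  qed
  have "(\<lambda>n. \<integral>\<^sup>+\<gamma>. q n \<gamma> \<partial>\<mu>) \<longlonglongrightarrow> (\<integral>\<^sup>+\<gamma>. 0 \<partial>\<mu>)"
  proof (rule nn_integral_dominated_convergence[where w="\<lambda>\<gamma>. ?Na * (4 * K \<gamma>)"])
    show "AE \<gamma> in \<mu>. q n \<gamma> \<le> ?Na * (4 * K \<gamma>)" for n
      using dominated by (auto intro!: AE_I')
    show "(\<integral>\<^sup>+\<gamma>. ?Na * (4 * K \<gamma>) \<partial>\<mu>) < \<infinity>"
      using a_finite K_finite by (simp add: nn_integral_cmult ennreal_mult_less_top K_def)
  qed (use pointwise in \<open>auto simp: q_def K_def\<close>)
  then show ?thesis
    by (simp add: q_def)
qed

lemma weighted_shift_square_diff_tendsto_0: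
  "((\<lambda>\<epsilon>::real. \<integral>\<^sup>+\<gamma>. (\<integral>\<^sup>+x\<in>\<Lambda>. (\<integral>\<^sup>+y.
      ennreal (a y * (F (x + \<epsilon> *\<^sub>R y) \<gamma> - F x \<gamma>)\<^sup>2) \<partial>lborel) \<partial>lborel) \<partial>\<mu>) \<longlongrightarrow> 0) (at 0)"
proof (rule tendsto_at_sequentiallyI)
  fix X :: "nat \<Rightarrow> real" assume X: "X \<longlonglongrightarrow> 0"
  then obtain E where "\<And>n. \<bar>X n\<bar> \<le> E"
    using convergent_imp_bounded[of X] by (auto simp: bounded_iff convergent_def)
  with X show "(\<lambda>n. \<integral>\<^sup>+\<gamma>. (\<integral>\<^sup>+x\<in>\<Lambda>. (\<integral>\<^sup>+y.
      ennreal (a y * (F (x + X n *\<^sub>R y) \<gamma> - F x \<gamma>)\<^sup>2) \<partial>lborel) \<partial>lborel) \<partial>\<mu>) \<longlonglongrightarrow> 0"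
    by (rule weighted_shift_square_diff_LIMSEQ_0)
qed

end

section \<open>Gaussian moments and conditional expectations\<close>

lemma std_normal_fourth_moment: "(\<integral>\<^sup>+z. ennreal (z ^ 4) \<partial>std_normal_distribution) = 3"
proof -
  have moment: "has_bochner_integral lborel (\<lambda>x. std_normal_density x * x ^ 4) 3"
    using std_normal_moment_even[of 2] by (simp add: fact_numeral)
  have "(\<integral>\<^sup>+z. ennreal (z ^ 4) \<partial>std_normal_distribution)
      = (\<integral>\<^sup>+z. ennreal (std_normal_density z * z ^ 4) \<partial>lborel)"
    by (subst nn_integral_density) (auto intro!: nn_integral_cong simp: ennreal_mult)
  also have "\<dots> = 3"
    using moment
    by (subst nn_integral_eq_integral) (auto simp: has_bochner_integral_iff)
  finally show ?thesis .
qed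

lemma gaussian_fourth_moment:
  fixes Z :: "'w \<Rightarrow> real"
  assumes "prob_space P" and [measurable]: "Z \<in> borel_measurable P"
    and char_scaled: "\<And>c t. char (distr P borel (\<lambda>\<omega>. c * Z \<omega>)) t = complex_of_real (exp (- (c * c * v) * t\<^sup>2 / 2))"
    and "0 \<le> v"
  shows "(\<integral>\<^sup>+\<omega>. ennreal ((Z \<omega>) ^ 4) \<partial>P) = ennreal (3 * v\<^sup>2)"
proof -
  interpret prob_space P by fact
  show ?thesis
  proof (cases "v = 0")
    case True
    have "char (distr P borel Z) = char (return borel (0::real))"
      using char_scaled[of 1] True by (simp add: fun_eq_iff char_def integral_return)
    then have "distr P borel Z = return borel 0"
      by (intro Levy_uniqueness real_distribution_distr)
        (simp_all add: real_distribution_def real_distribution_axioms_def prob_space_return)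
    then have "(\<integral>\<^sup>+z. ennreal (z ^ 4) \<partial>distr P borel Z) = 0"
      by (simp add: nn_integral_return)
    then show ?thesis
      using True by (subst (asm) nn_integral_distr) auto
  next
    case False
    define c where "c = 1 / sqrt v"
    have c: "c * c * v = 1"
      using False \<open>0 \<le> v\<close> by (simp add: c_def)
    have "char (distr P borel (\<lambda>\<omega>. c * Z \<omega>)) = char std_normal_distribution"
      using char_scaled[of c] c by (simp add: fun_eq_iff char_std_normal_distribution)
    then have "distr P borel (\<lambda>\<omega>. c * Z \<omega>) = std_normal_distribution"
      by (intro Levy_uniqueness real_dist_normal_dist) auto
    then have "(\<integral>\<^sup>+z. ennreal (z ^ 4) \<partial>distr P borel (\<lambda>\<omega>. c * Z \<omega>)) = 3"
      by (simp add: std_normal_fourth_moment)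
    then have moment: "(\<integral>\<^sup>+\<omega>. ennreal ((c * Z \<omega>) ^ 4) \<partial>P) = 3"
      by (subst (asm) nn_integral_distr) auto
    have "ennreal ((Z \<omega>) ^ 4) = ennreal (v\<^sup>2) * ennreal ((c * Z \<omega>) ^ 4)" for \<omega>
    proof -
      have "v\<^sup>2 * (c * Z \<omega>) ^ 4 = (c * c * v) ^ 2 * (Z \<omega>) ^ 4"
        by (simp add: power_mult_distrib power2_eq_square power4_eq_xxxx)
      then show ?thesis
        by (simp add: c ennreal_mult[symmetric] zero_le_even_power)
    qed
    then have "(\<integral>\<^sup>+\<omega>. ennreal ((Z \<omega>) ^ 4) \<partial>P) = ennreal (v\<^sup>2) * 3"
      by (simp add: nn_integral_cmult moment)
    then show ?thesis
      by (simp add: ennreal_mult mult.commute)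
  qed
qed

lemma nn_integral_comp_mult_eq:
  fixes V :: "'p \<Rightarrow> real" and R :: "'g \<Rightarrow> real"
  assumes [measurable]: "s \<in> measurable Q G" "V \<in> borel_measurable Q" "R \<in> borel_measurable G"
      "h \<in> borel_measurable G"
    and eq: "\<And>S. S \<in> sets G \<Longrightarrow>
      (\<integral>\<^sup>+p. indicator S (s p) * ennreal (V p) \<partial>Q) = (\<integral>\<^sup>+p. indicator S (s p) * ennreal (R (s p)) \<partial>Q)"
  shows "(\<integral>\<^sup>+p. h (s p) * ennreal (V p) \<partial>Q) = (\<integral>\<^sup>+p. h (s p) * ennreal (R (s p)) \<partial>Q)"
proof -
  have "distr (density Q (\<lambda>p. ennreal (V p))) G s = distr (density Q (\<lambda>p. ennreal (R (s p)))) G s"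
  proof (rule measure_eqI)
    fix S assume "S \<in> sets (distr (density Q (\<lambda>p. ennreal (V p))) G s)"
    then have [measurable]: "S \<in> sets G"
      by simp
    have "(\<integral>\<^sup>+p. ennreal (f p) * indicator (s -` S \<inter> space Q) p \<partial>Q)
        = (\<integral>\<^sup>+p. indicator S (s p) * ennreal (f p) \<partial>Q)" for f :: "'p \<Rightarrow> real"
      by (intro nn_integral_cong) (auto simp: indicator_def)
    then show "emeasure (distr (density Q (\<lambda>p. ennreal (V p))) G s) S
        = emeasure (distr (density Q (\<lambda>p. ennreal (R (s p)))) G s) S"
      using eq[of S] by (simp add: emeasure_distr emeasure_density)
  qed simp
  then have "(\<integral>\<^sup>+g. h g \<partial>distr (density Q (\<lambda>p. ennreal (V p))) G s)
      = (\<integral>\<^sup>+g. h g \<partial>distr (density Q (\<lambda>p. ennreal (R (s p)))) G s)"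
    by simp
  then show ?thesis
    by (simp add: nn_integral_distr nn_integral_density mult.commute)
qed

(* From 2 f V <= f^2 + V^2 after integration; finiteness of int f^2 is needed to cancel it. *)
lemma nn_integral_square_le_of_le_mult:
  fixes f V :: "'p \<Rightarrow> real"
  assumes [measurable]: "f \<in> borel_measurable Q" "V \<in> borel_measurable Q"
    and "\<And>p. 0 \<le> f p" "\<And>p. 0 \<le> V p"
    and finite: "(\<integral>\<^sup>+p. ennreal ((f p)\<^sup>2) \<partial>Q) < \<infinity>"
    and le: "(\<integral>\<^sup>+p. ennreal ((f p)\<^sup>2) \<partial>Q) \<le> (\<integral>\<^sup>+p. ennreal (f p) * ennreal (V p) \<partial>Q)"
  shows "(\<integral>\<^sup>+p. ennreal ((f p)\<^sup>2) \<partial>Q) \<le> (\<integral>\<^sup>+p. ennreal ((V p)\<^sup>2) \<partial>Q)"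
proof -
  let ?F = "\<integral>\<^sup>+p. ennreal ((f p)\<^sup>2) \<partial>Q" and ?V = "\<integral>\<^sup>+p. ennreal ((V p)\<^sup>2) \<partial>Q"
  have "2 * (\<integral>\<^sup>+p. ennreal (f p) * ennreal (V p) \<partial>Q) = (\<integral>\<^sup>+p. ennreal (2 * (f p * V p)) \<partial>Q)"
    using assms by (simp add: nn_integral_cmult[symmetric] ennreal_mult)
  also have "\<dots> \<le> (\<integral>\<^sup>+p. ennreal ((f p)\<^sup>2) + ennreal ((V p)\<^sup>2) \<partial>Q)"
  proof (intro nn_integral_mono)
    fix p
    have "2 * (f p * V p) \<le> (f p)\<^sup>2 + (V p)\<^sup>2"
      using zero_le_power2[of "f p - V p"] by (simp add: power2_eq_square algebra_simps)
    then show "ennreal (2 * (f p * V p)) \<le> ennreal ((f p)\<^sup>2) + ennreal ((V p)\<^sup>2)"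
      by (simp add: ennreal_leI flip: ennreal_plus)
  qed
  also have "\<dots> = ?F + ?V"
    by (simp add: nn_integral_add)
  finally have "?F + ?F \<le> ?F + ?V"
    using order_trans[OF mult_left_mono[OF le, of 2]] by (simp add: mult_2)
  then show ?thesis
    using finite by (auto simp: ennreal_add_left_cancel_le)
qed

(* R o s is a version of the conditional expectation of V given s, so this is the conditional Jensen
  inequality for squares; R is truncated so that the cancellation in the previous lemma is legitimate. *)
lemma nn_integral_cond_square_le:
  fixes V :: "'p \<Rightarrow> real" and R :: "'g \<Rightarrow> real"
  assumes [measurable]: "s \<in> measurable Q G" "V \<in> borel_measurable Q" "R \<in> borel_measurable G"
    and V_nonneg: "\<And>p. 0 \<le> V p" and R_nonneg: "\<And>g. 0 \<le> R g"
    and finite: "emeasure Q (space Q) < \<infinity>"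
    and eq: "\<And>S. S \<in> sets G \<Longrightarrow>
      (\<integral>\<^sup>+p. indicator S (s p) * ennreal (V p) \<partial>Q) = (\<integral>\<^sup>+p. indicator S (s p) * ennreal (R (s p)) \<partial>Q)"
  shows "(\<integral>\<^sup>+p. ennreal ((R (s p))\<^sup>2) \<partial>Q) \<le> (\<integral>\<^sup>+p. ennreal ((V p)\<^sup>2) \<partial>Q)"
proof -
  define m where "m n g = min (R g) (real n)" for n g
  have [measurable]: "m n \<in> borel_measurable G" for n
    unfolding m_def by measurable
  have m_nonneg: "0 \<le> m n g" for n g
    using R_nonneg by (simp add: m_def)
  have truncated: "(\<integral>\<^sup>+p. ennreal ((m n (s p))\<^sup>2) \<partial>Q) \<le> (\<integral>\<^sup>+p. ennreal ((V p)\<^sup>2) \<partial>Q)" for n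
  proof (rule nn_integral_square_le_of_le_mult)
    have "(\<integral>\<^sup>+p. ennreal ((m n (s p))\<^sup>2) \<partial>Q) \<le> (\<integral>\<^sup>+p. ennreal ((real n)\<^sup>2) \<partial>Q)"
      by (intro nn_integral_mono ennreal_leI power_mono) (auto simp: m_def m_nonneg R_nonneg)
    also have "\<dots> < \<infinity>"
      using finite by (simp add: ennreal_mult_less_top)
    finally show "(\<integral>\<^sup>+p. ennreal ((m n (s p))\<^sup>2) \<partial>Q) < \<infinity>" .
    have "(\<integral>\<^sup>+p. ennreal ((m n (s p))\<^sup>2) \<partial>Q) \<le> (\<integral>\<^sup>+p. ennreal (m n (s p)) * ennreal (R (s p)) \<partial>Q)"
      using R_nonneg m_nonneg
      by (intro nn_integral_mono)
        (auto simp: m_def power2_eq_square ennreal_mult[symmetric] intro!: ennreal_leI mult_left_mono)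
    also have "\<dots> = (\<integral>\<^sup>+p. ennreal (m n (s p)) * ennreal (V p) \<partial>Q)"
      by (rule nn_integral_comp_mult_eq[where h="\<lambda>g. ennreal (m n g)", symmetric]) (use eq in auto)
    finally show "(\<integral>\<^sup>+p. ennreal ((m n (s p))\<^sup>2) \<partial>Q) \<le> \<dots>" .
  qed (auto simp: m_nonneg V_nonneg)
  have "(\<lambda>n. \<integral>\<^sup>+p. ennreal ((m n (s p))\<^sup>2) \<partial>Q) \<longlonglongrightarrow> (\<integral>\<^sup>+p. ennreal ((R (s p))\<^sup>2) \<partial>Q)"
  proof (rule nn_integral_LIMSEQ)
    show "incseq (\<lambda>n p. ennreal ((m n (s p))\<^sup>2))"
      by (auto simp: incseq_def le_fun_def m_def m_nonneg R_nonneg intro!: ennreal_leI power_mono)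
    fix p
    obtain N :: nat where N: "R (s p) \<le> N"
      using real_arch_simple by blast
    have "eventually (\<lambda>n. ennreal ((m n (s p))\<^sup>2) = ennreal ((R (s p))\<^sup>2)) sequentially"
      using eventually_ge_at_top[of N] by eventually_elim (use N in \<open>auto simp: m_def\<close>)
    then show "(\<lambda>n. ennreal ((m n (s p))\<^sup>2)) \<longlonglongrightarrow> ennreal ((R (s p))\<^sup>2)"
      by (rule tendsto_eventually)
  qed simp
  then show ?thesis
    using truncated by (intro LIMSEQ_le_const2) auto
qed

lemma nn_integral_powr_square_le:
  fixes R :: "'g \<Rightarrow> real"
  assumes "prob_space \<mu>" and [measurable]: "R \<in> borel_measurable \<mu>"
    and "\<And>\<gamma>. 0 \<le> R \<gamma>" "0 < \<alpha>" "\<alpha> \<le> 1"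
  shows "(\<integral>\<^sup>+\<gamma>. ennreal ((R \<gamma> powr \<alpha>)\<^sup>2) \<partial>\<mu>) \<le> 1 + (\<integral>\<^sup>+\<gamma>. ennreal ((R \<gamma>)\<^sup>2) \<partial>\<mu>)"
proof -
  interpret prob_space \<mu> by fact
  have "(\<integral>\<^sup>+\<gamma>. ennreal ((R \<gamma> powr \<alpha>)\<^sup>2) \<partial>\<mu>) \<le> (\<integral>\<^sup>+\<gamma>. 1 + ennreal ((R \<gamma>)\<^sup>2) \<partial>\<mu>)"
    using powr_square_le_1_plus_square assms
    by (intro nn_integral_mono) (simp add: ennreal_leI flip: ennreal_1 ennreal_plus)
  also have "\<dots> = 1 + (\<integral>\<^sup>+\<gamma>. ennreal ((R \<gamma>)\<^sup>2) \<partial>\<mu>)"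
    by (subst nn_integral_add) (auto simp: emeasure_space_1)
  finally show ?thesis .
qed

section \<open>The Gaussian field and the Cox process\<close>

lemma gaussian_field_char:
  fixes Y :: "'a::euclidean_space \<Rightarrow> 'w \<Rightarrow> real"
  assumes "gaussian_field P Y k"
  shows "char (distr P borel (\<lambda>\<omega>. c * Y x \<omega>)) t = complex_of_real (exp (- (c * c * k x x) * t\<^sup>2 / 2))"
proof -
  have "\<forall>n (xs :: nat \<Rightarrow> 'a) (c :: nat \<Rightarrow> real) t.
      char (distr P borel (\<lambda>\<omega>. \<Sum>i<n. c i * Y (xs i) \<omega>)) t =
      complex_of_real (exp (- (\<Sum>i<n. \<Sum>j<n. c i * c j * k (xs i) (xs j)) * t\<^sup>2 / 2))"
    using assms unfolding gaussian_field_def by blast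
  from this[rule_format, where n="Suc 0" and xs="\<lambda>_. x" and c="\<lambda>_. c" and t=t] show ?thesis
    by simp
qed

lemma kcov_diag:
  fixes \<kappa> :: "'a::euclidean_space \<Rightarrow> real"
  assumes [measurable]: "\<kappa> \<in> borel_measurable borel"
  shows "kcov \<kappa> x x = kcov \<kappa> 0 0"
proof -
  have "kcov \<kappa> x x = (LINT z|distr lborel borel ((+) x). \<kappa> (x - z) * \<kappa> (x - z))"
    by (simp add: kcov_def lborel_distr_plus)
  also have "\<dots> = kcov \<kappa> 0 0"
    by (subst integral_distr) (auto simp: kcov_def)
  finally show ?thesis .
qed

lemma cox_joint_emeasure_times_space:
  assumes "cox_joint P Y Pt" and "A \<in> sets P"
  shows "emeasure Pt (A \<times> space Gamma) = emeasure P A"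
proof -
  have "\<forall>A (m::nat) (B::nat \<Rightarrow> _ set) (n::nat \<Rightarrow> nat).
      A \<in> sets P \<longrightarrow> (\<forall>i<m. B i \<in> sets lborel \<and> bounded (B i)) \<longrightarrow> disjoint_family_on B {..<m} \<longrightarrow>
      emeasure Pt (A \<times> {\<gamma>\<in>space Gamma. \<forall>i<m. card (\<gamma> \<inter> B i) = n i}) =
      (\<integral>\<^sup>+\<omega>\<in>A. ennreal (\<Prod>i<m. poisson_prob (LINT x:B i|lborel. (Y x \<omega>)\<^sup>2) (n i)) \<partial>P)"
    using assms(1) unfolding cox_joint_def by blast
  from this[rule_format, where A=A and m=0 and B="\<lambda>_. {}" and n="\<lambda>_. 0"] show ?thesis
    using assms(2) by (simp add: disjoint_family_on_def)
qed

lemma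
  assumes cox: "cox_joint P Y Pt" and "prob_space P"
  shows cox_joint_prob_space: "prob_space Pt"
    and cox_joint_distr_fst: "distr Pt P fst = P"
    and cox_joint_prob_space_distr_snd: "prob_space (distr Pt Gamma snd)"
proof -
  interpret P: prob_space P by fact
  have sets: "sets Pt = sets (P \<Otimes>\<^sub>M Gamma)"
    using cox by (simp add: cox_joint_def)
  then have space: "space Pt = space P \<times> space Gamma"
    using sets_eq_imp_space_eq[OF sets] by (simp add: space_pair_measure)
  show "prob_space Pt"
    using cox_joint_emeasure_times_space[OF cox sets.top]
    by (intro prob_spaceI) (simp add: space P.emeasure_space_1)
  have [measurable]: "fst \<in> measurable Pt P" "snd \<in> measurable Pt Gamma"
    using measurable_cong_sets[OF sets refl] measurable_fst measurable_snd by blast+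
  show "prob_space (distr Pt Gamma snd)"
    by (rule prob_space.prob_space_distr[OF \<open>prob_space Pt\<close>]) simp
  show "distr Pt P fst = P"
  proof (rule measure_eqI)
    fix A assume "A \<in> sets (distr Pt P fst)"
    then have "A \<in> sets P"
      by simp
    moreover have "fst -` A \<inter> space Pt = A \<times> space Gamma"
      using sets.sets_into_space[OF \<open>A \<in> sets P\<close>] by (auto simp: space)
    ultimately show "emeasure (distr Pt P fst) A = emeasure P A"
      using cox_joint_emeasure_times_space[OF cox] by (simp add: emeasure_distr)
  qed simp
qed

lemma papangelou_square_moment_le:
  fixes \<kappa> :: "'a::euclidean_space \<Rightarrow> real"
  assumes [measurable]: "\<kappa> \<in> borel_measurable borel"
    and gauss: "gaussian_field P Y (kcov \<kappa>)" and cox: "cox_joint P Y Pt" and pap: "papangelou Pt Y r"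
  shows "AE x in lborel. (\<integral>\<^sup>+\<gamma>. ennreal ((r x \<gamma>)\<^sup>2) \<partial>distr Pt Gamma snd) \<le> ennreal (3 * (kcov \<kappa> 0 0)\<^sup>2)"
proof -
  have P: "prob_space P"
    using gauss by (simp add: gaussian_field_def)
  have "(\<lambda>(x, \<omega>). Y x \<omega>) \<in> borel_measurable (lborel \<Otimes>\<^sub>M P)"
    using gauss by (simp add: gaussian_field_def)
  from measurable_comp[OF measurable_Pair1' this]
  have [measurable]: "Y x \<in> borel_measurable P" for x
    by (simp add: comp_def)
  have "(\<lambda>(x, \<gamma>). r x \<gamma>) \<in> borel_measurable (lborel \<Otimes>\<^sub>M Gamma)"
    using pap by (simp add: papangelou_def)
  from measurable_comp[OF measurable_Pair1' this]
  have [measurable]: "r x \<in> borel_measurable Gamma" for x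
    by (simp add: comp_def)
  have sets: "sets Pt = sets (P \<Otimes>\<^sub>M Gamma)"
    using cox by (simp add: cox_joint_def)
  have [measurable]: "fst \<in> measurable Pt P" "snd \<in> measurable Pt Gamma"
    using measurable_cong_sets[OF sets refl] measurable_fst measurable_snd by blast+
  have "0 \<le> kcov \<kappa> 0 0"
    unfolding kcov_def by (intro integral_nonneg_AE) auto
  then have fourth_moment: "(\<integral>\<^sup>+\<omega>. ennreal ((Y x \<omega>) ^ 4) \<partial>P) = ennreal (3 * (kcov \<kappa> 0 0)\<^sup>2)" for x
    using gaussian_fourth_moment[OF P _ gaussian_field_char[OF gauss]] kcov_diag[of \<kappa> x] by simp
  have "AE x in lborel. \<forall>S\<in>sets Gamma.
      (\<integral>\<^sup>+p. indicator S (snd p) * ennreal ((Y x (fst p))\<^sup>2) \<partial>Pt) =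
      (\<integral>\<^sup>+p. indicator S (snd p) * ennreal (r x (snd p)) \<partial>Pt)"
    using pap by (simp add: papangelou_def)
  then show ?thesis
  proof eventually_elim
    case (elim x)
    have "(\<integral>\<^sup>+\<gamma>. ennreal ((r x \<gamma>)\<^sup>2) \<partial>distr Pt Gamma snd) = (\<integral>\<^sup>+p. ennreal ((r x (snd p))\<^sup>2) \<partial>Pt)"
      by (simp add: nn_integral_distr)
    also have "\<dots> \<le> (\<integral>\<^sup>+p. ennreal (((Y x (fst p))\<^sup>2)\<^sup>2) \<partial>Pt)"
      using elim pap prob_space.emeasure_space_1[OF cox_joint_prob_space[OF cox P]]
      by (intro nn_integral_cond_square_le[where G=Gamma]) (auto simp: papangelou_def)
    also have "\<dots> = (\<integral>\<^sup>+\<omega>. ennreal ((Y x \<omega>) ^ 4) \<partial>distr Pt P fst)"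
      by (simp add: nn_integral_distr flip: power_mult)
    also have "\<dots> = ennreal (3 * (kcov \<kappa> 0 0)\<^sup>2)"
      by (simp add: cox_joint_distr_fst[OF cox P] fourth_moment)
    finally show ?case .
  qed
qed

lemma papangelou_measurable:
  assumes "papangelou Pt Y r"
  shows "(\<lambda>(x, \<gamma>). r x \<gamma>) \<in> borel_measurable (lborel \<Otimes>\<^sub>M distr Pt Gamma snd)"
proof -
  have "sets (lborel \<Otimes>\<^sub>M distr Pt Gamma snd) = sets (lborel \<Otimes>\<^sub>M Gamma)"
    by (rule sets_pair_measure_cong) simp_all
  then show ?thesis
    using assms measurable_cong_sets[OF _ refl] by (auto simp: papangelou_def)
qed

lemma papangelou_powr_square_moment_le:
  fixes \<kappa> :: "'a::euclidean_space \<Rightarrow> real"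
  assumes "kernel_ok \<kappa>" "gaussian_field P Y (kcov \<kappa>)" "cox_joint P Y Pt" "papangelou Pt Y r"
    and "0 < \<alpha>" "\<alpha> \<le> 1"
  shows "AE x in lborel. (\<integral>\<^sup>+\<gamma>. ennreal ((r x \<gamma> powr \<alpha>)\<^sup>2) \<partial>distr Pt Gamma snd)
    \<le> ennreal (1 + 3 * (kcov \<kappa> 0 0)\<^sup>2)"
proof -
  let ?\<mu> = "distr Pt Gamma snd"
  have "prob_space ?\<mu>"
    using assms(2,3) by (intro cox_joint_prob_space_distr_snd) (auto simp: gaussian_field_def)
  have "\<kappa> \<in> borel_measurable borel"
    using assms(1) by (simp add: kernel_ok_def sq_int_def)
  from papangelou_square_moment_le[OF this assms(2-4)] show ?thesis
  proof eventually_elim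
    case (elim x)
    have "r x \<in> borel_measurable ?\<mu>"
      using measurable_comp[OF measurable_Pair1' papangelou_measurable[OF assms(4)], of x]
      by (simp add: comp_def)
    then have "(\<integral>\<^sup>+\<gamma>. ennreal ((r x \<gamma> powr \<alpha>)\<^sup>2) \<partial>?\<mu>) \<le> 1 + (\<integral>\<^sup>+\<gamma>. ennreal ((r x \<gamma>)\<^sup>2) \<partial>?\<mu>)"
      using \<open>prob_space ?\<mu>\<close> assms(4-6) by (intro nn_integral_powr_square_le) (auto simp: papangelou_def)
    also have "\<dots> \<le> 1 + ennreal (3 * (kcov \<kappa> 0 0)\<^sup>2)"
      using elim by (rule add_left_mono)
    finally show ?case
      by simp
  qed
qed

theorem lemma4p1:
  fixes \<kappa> :: "'a::euclidean_space \<Rightarrow> real"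
    and a :: "'a \<Rightarrow> real"
    and P :: "'w measure"
    and Y :: "'a \<Rightarrow> 'w \<Rightarrow> real"
    and Pt :: "('w \<times> 'a set) measure"
    and r :: "'a \<Rightarrow> 'a set \<Rightarrow> real"
    and \<Lambda> :: "'a set"
    and \<alpha> :: real
  assumes "kernel_ok \<kappa>"
    and "weight_ok a"
    and "gaussian_field P Y (kcov \<kappa>)"
    and "cox_joint P Y Pt"
    and "papangelou Pt Y r"
    and "\<Lambda> \<in> sets borel" and "bounded \<Lambda>"
    and "0 < \<alpha>" and "\<alpha> \<le> 1"
  shows "(\<forall>\<epsilon>::real. (\<integral>\<^sup>+\<gamma>. (\<integral>\<^sup>+x\<in>\<Lambda>. (\<integral>\<^sup>+y.
             ennreal (a y * (r (x + \<epsilon> *\<^sub>R y) \<gamma> powr \<alpha>)\<^sup>2) \<partial>lborel) \<partial>lborel)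
           \<partial>(distr Pt Gamma snd)) < \<infinity>)
       \<and> ((\<lambda>\<epsilon>::real. \<integral>\<^sup>+\<gamma>. (\<integral>\<^sup>+x\<in>\<Lambda>. (\<integral>\<^sup>+y.
             ennreal (a y * (r (x + \<epsilon> *\<^sub>R y) \<gamma> powr \<alpha> - r x \<gamma> powr \<alpha>)\<^sup>2) \<partial>lborel) \<partial>lborel)
           \<partial>(distr Pt Gamma snd)) \<longlongrightarrow> 0) (at 0)"
proof -
  let ?\<mu> = "distr Pt Gamma snd"
  have "prob_space ?\<mu>"
    using assms(3,4) by (intro cox_joint_prob_space_distr_snd) (auto simp: gaussian_field_def)
  then have \<mu>: "sigma_finite_measure ?\<mu>"
    by (rule prob_space_imp_sigma_finite)
  have [measurable]: "(\<lambda>(x, \<gamma>). r x \<gamma>) \<in> borel_measurable (lborel \<Otimes>\<^sub>M ?\<mu>)"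
    by (rule papangelou_measurable[OF assms(5)])
  have F: "(\<lambda>(x, \<gamma>). r x \<gamma> powr \<alpha>) \<in> borel_measurable (lborel \<Otimes>\<^sub>M ?\<mu>)"
    by measurable
  note moment = papangelou_powr_square_moment_le[OF assms(1,3-5,8,9)]
  have a: "a \<in> borel_measurable borel" "\<And>y. 0 \<le> a y" "(\<integral>\<^sup>+y. ennreal (a y) \<partial>lborel) < \<infinity>"
      "bounded {y. a y \<noteq> 0}"
    using assms(2) by (auto simp: weight_ok_def integrable_iff_bounded)
  show ?thesis
    using weighted_shift_square_finite[OF \<mu> F moment a assms(6,7)]
      weighted_shift_square_diff_tendsto_0[OF \<mu> F moment a assms(6,7)]
    by blast
qed

end
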